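(* Let $n\ge2$ and let $\mathfrak{g}_n$ be the Lie algebra defined in the context. Then $\mathfrak{g}_n$ admits $\nu_n=T_{n-2}+1=\frac{(n-1)(n-2)}{2}+1$ functionally independent Casimir invariants, of which $T_{n-2}$ are the central elements $z_{i,j}$; hence there is only one nontrivial Casimir invariant, up to multiplication by scalars and by central elements. Equivalently, the matrix $A=\big(\sum_k c_{ij}^k x_k\big)_{i,j}$ formed from the structure constants of $\mathfrak{g}_n$ in commuting variables has rank $2(n-1)$.
   Context: $\mathbb{K}$ is $\mathbb{R}$ or $\mathbb{C}$; $T_m=m(m+1)/2$. For $n\ge2$, $\mathfrak{g}_n$ is the Lie algebra of dimension $T_n$ with basis $h,x_-,x_+$, $y_{i,\pm}$ ($1\le i\le n-2$), $z_{i,j}$ ($1\le i\le j\le n-2$), whose nonzero brackets (up to antisymmetry) are $[x_+,x_-]=h$, $[h,x_\pm]=\pm2x_\pm$, $[h,y_{i,\pm}]=\pm y_{i,\pm}$, $[x_-,y_{i,+}]=y_{i,-}$, $[x_+,y_{i,-}]=y_{i,+}$, $[y_{i,+},y_{j,-}]=z_{\min(i,j),\max(i,j)}$; all other brackets of basis elements vanish, so the centre is spanned by the $z_{i,j}$. With structure constants $[x_i,x_j]=\sum_k c_{ij}^kx_k$ in a basis $x_1,\dots,x_d$, the number of functionally independent Casimir invariants (functions on $\mathfrak{g}_n^*$ Poisson-commuting, for the Lie–Poisson bracket, with all linear functions) equals $\dim\mathfrak{g}_n-\operatorname{rank}A$ with $A=\big(\sum_kc_{ij}^kx_k\big)_{i,j=1}^d$,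 the $x_k$ being commuting variables. *)

theory Defs
  imports "Jordan_Normal_Form.DL_Submatrix" "Jordan_Normal_Form.Determinant" Complex_Main
begin

definition T :: "nat \<Rightarrow> nat" where "T m = m * (m + 1) div 2"

text \<open>Basis symbols of g_n: h, x_-, x_+, y_{i,+} (Y i True), y_{i,-} (Y i False), z_{i,j}.\<close>
datatype gbasis = H | Xm | Xp | Y nat bool | Z nat nat

definition gbasis_list :: "nat \<Rightarrow> gbasis list" where
  "gbasis_list n = [H, Xm, Xp]
     @ map (\<lambda>i. Y i True) [1..<n-1] @ map (\<lambda>i. Y i False) [1..<n-1]
     @ concat (map (\<lambda>i. map (\<lambda>j. Z i j) [i..<n-1]) [1..<n-1])"

definition zlist :: "nat \<Rightarrow> gbasis list" where
  "zlist n = concat (map (\<lambda>i. map (\<lambda>j. Z i j) [i..<n-1]) [1..<n-1])"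

definition unitv :: "gbasis \<Rightarrow> int \<Rightarrow> gbasis \<Rightarrow> int" where
  "unitv b c = (\<lambda>k. if k = b then c else 0)"

text \<open>The listed nonzero brackets, in one orientation each.\<close>
fun br0 :: "gbasis \<Rightarrow> gbasis \<Rightarrow> gbasis \<Rightarrow> int" where
  "br0 Xp Xm = unitv H 1"
| "br0 H Xp = unitv Xp 2"
| "br0 H Xm = unitv Xm (-2)"
| "br0 H (Y i True) = unitv (Y i True) 1"
| "br0 H (Y i False) = unitv (Y i False) (-1)"
| "br0 Xm (Y i True) = unitv (Y i False) 1"
| "br0 Xp (Y i False) = unitv (Y i True) 1"
| "br0 (Y i True) (Y j False) = unitv (Z (min i j) (max i j)) 1"
| "br0 _ _ = (\<lambda>_. 0)"

definition bracket :: "gbasis \<Rightarrow> gbasis \<Rightarrow> gbasis \<Rightarrow> int" where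
  "bracket a b = (\<lambda>k. br0 a b k - br0 b a k)"

text \<open>The matrix A = (\<Sum>_k c_ij^k x_k)_{i,j}, evaluated at a point x of K^d
  (the commuting variables x_k are given the values x k).\<close>
definition Amat :: "nat \<Rightarrow> (gbasis \<Rightarrow> 'a::comm_ring_1) \<Rightarrow> 'a mat" where
  "Amat n x = (let L = gbasis_list n in
     mat (length L) (length L)
       (\<lambda>(i, j). \<Sum>k\<leftarrow>L. of_int (bracket (L ! i) (L ! j) k) * x k))"

text \<open>Rank of A as a matrix over the polynomial ring K[x_1..x_d] (equivalently its
  fraction field): the largest r such that some r x r minor is a nonzero polynomial.
  Over an infinite field K a polynomial is nonzero iff it does not vanish at some point.\<close>
definition generic_rank :: "'a::field itself \<Rightarrow> nat \<Rightarrow> nat" where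
  "generic_rank _ n = Max {r. \<exists>I J. I \<subseteq> {..<length (gbasis_list n)} \<and>
        J \<subseteq> {..<length (gbasis_list n)} \<and> card I = r \<and> card J = r \<and>
        (\<exists>x :: gbasis \<Rightarrow> 'a. det (submatrix (Amat n x) I J) \<noteq> 0)}"

definition num_casimirs :: "'a::field itself \<Rightarrow> nat \<Rightarrow> nat" where
  "num_casimirs K n = length (gbasis_list n) - generic_rank K n"

end

theory Submission
  imports Defs
begin

(*
  The rows and columns of A that belong to the central elements z_{i,j} vanish, so a nonzero
  minor only uses the 2n - 1 indices of h, x_-, x_+ and the y_{i,+-}.  The only minor of that
  size is the principal one, a skew-symmetric matrix of odd order, whose determinant vanishes;
  hence rank A <= 2(n - 1).  Conversely, at the point with x_h = x_{z_{i,i}} = 1 and all other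
  coordinates 0, the minor on x_-+ and y_{i,+-} has exactly one nonzero entry in each row, coming
  from [x_+, x_-] = h and [y_{i,+}, y_{i,-}] = z_{i,i}: it is a signed permutation matrix.
*)

section \<open>Determinants and minors\<close>

lemma submatrix_carrier_mat:
  assumes "A \<in> carrier_mat N N" "I \<subseteq> {..<N}" "J \<subseteq> {..<N}"
  shows "submatrix A I J \<in> carrier_mat (card I) (card J)"
proof -
  have dims: "dim_row A = N" "dim_col A = N" using assms(1) by auto
  have "{i. i < N \<and> i \<in> I} = I" "{j. j < N \<and> j \<in> J} = J" using assms(2,3) by auto
  then show ?thesis by (intro carrier_matI) (simp_all add: dim_submatrix dims)
qed

lemma submatrix_index_subset:
  assumes "A \<in> carrier_mat N N" "I \<subseteq> {..<N}" "J \<subseteq> {..<N}" "p < card I" "q < card J"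
  shows "submatrix A I J $$ (p, q) = A $$ (pick I p, pick J q)"
proof -
  have "{i. i < dim_row A \<and> i \<in> I} = I" "{j. j < dim_col A \<and> j \<in> J} = J"
    using assms(1-3) by auto
  then show ?thesis using assms(4,5) by (simp add: submatrix_index)
qed

lemma transpose_submatrix: "transpose_mat (submatrix A I J) = submatrix (transpose_mat A) J I"
proof (rule eq_matI)
  fix i j assume ij: "i < dim_row (submatrix (transpose_mat A) J I)"
    "j < dim_col (submatrix (transpose_mat A) J I)"
  then have "pick J i < dim_col A" "pick I j < dim_row A"
    by (simp_all add: dim_submatrix pick_le)
  with ij show "transpose_mat (submatrix A I J) $$ (i, j) = submatrix (transpose_mat A) J I $$ (i, j)"
    by (simp add: submatrix_def)
qed (simp_all add: dim_submatrix)

lemma det_zero_row: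
  assumes B: "B \<in> carrier_mat N N" and k: "k < N" and zero: "\<And>j. j < N \<Longrightarrow> B $$ (k, j) = 0"
  shows "det B = 0"
proof -
  have vanish: "signof p * (\<Prod>i = 0..<N. B $$ (i, p i)) = 0" if p: "p permutes {0..<N}" for p
  proof -
    have "p k < N" using k permutes_in_image[OF p] by simp
    then have "B $$ (k, p k) = 0" by (rule zero)
    then have "(\<Prod>i = 0..<N. B $$ (i, p i)) = 0" using k by (intro prod_zero) auto
    then show ?thesis by simp
  qed
  show ?thesis unfolding det_def'[OF B] by (rule sum.neutral) (simp add: vanish)
qed

lemma det_submatrix_zero_row:
  assumes A: "A \<in> carrier_mat N N" and IJ: "I \<subseteq> {..<N}" "J \<subseteq> {..<N}" "card J = card I"
    and i: "i \<in> I" and zero: "\<And>j. j < N \<Longrightarrow> A $$ (i, j) = 0"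
  shows "det (submatrix A I J) = 0"
proof (rule det_zero_row)
  let ?k = "card {a \<in> I. a < i}"
  show "submatrix A I J \<in> carrier_mat (card I) (card I)"
    using submatrix_carrier_mat[OF A IJ(1,2)] IJ(3) by simp
  have "finite I" using IJ(1) finite_subset by blast
  then show k: "?k < card I" using i by (intro psubset_card_mono) auto
  fix q assume q: "q < card I"
  have "pick J q \<in> J" using q IJ(3) by (simp add: pick_in_set)
  then have "A $$ (i, pick J q) = 0" using IJ(2) zero by blast
  then show "submatrix A I J $$ (?k, q) = 0"
    using submatrix_index_subset[OF A IJ(1,2) k] q IJ(3) pick_card_in_set[OF i] by simp
qed

lemma det_submatrix_zero_col:
  assumes A: "A \<in> carrier_mat N N" and IJ: "I \<subseteq> {..<N}" "J \<subseteq> {..<N}" "card J = card I"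
    and j: "j \<in> J" and zero: "\<And>i. i < N \<Longrightarrow> A $$ (i, j) = 0"
  shows "det (submatrix A I J) = 0"
proof -
  have AT: "transpose_mat A \<in> carrier_mat N N" using A by simp
  have "submatrix A I J \<in> carrier_mat (card I) (card I)"
    using submatrix_carrier_mat[OF A IJ(1,2)] IJ(3) by simp
  then have "det (submatrix A I J) = det (submatrix (transpose_mat A) J I)"
    by (simp add: transpose_submatrix[symmetric] det_transpose)
  also have "\<dots> = 0"
  proof (rule det_submatrix_zero_row[OF AT IJ(2,1) IJ(3)[symmetric] j])
    fix i assume "i < N"
    then show "transpose_mat A $$ (j, i) = 0" using A j IJ(2) zero by auto
  qed
  finally show ?thesis .
qed

lemma det_submatrix_nonzero_imp_subset:
  assumes A: "A \<in> carrier_mat N N" and IJ: "I \<subseteq> {..<N}" "J \<subseteq> {..<N}" "card J = card I"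
    and supp: "\<And>i j. i < N \<Longrightarrow> j < N \<Longrightarrow> A $$ (i, j) \<noteq> 0 \<Longrightarrow> i \<in> K \<and> j \<in> K"
    and det: "det (submatrix A I J) \<noteq> 0"
  shows "I \<subseteq> K" "J \<subseteq> K"
proof -
  show "I \<subseteq> K"
  proof
    fix i assume i: "i \<in> I"
    show "i \<in> K"
    proof (rule ccontr)
      assume "i \<notin> K"
      then have "A $$ (i, j) = 0" if "j < N" for j using supp[of i j] that i IJ(1) by auto
      then show False using det_submatrix_zero_row[OF A IJ i] det by blast
    qed
  qed
  show "J \<subseteq> K"
  proof
    fix j assume j: "j \<in> J"
    show "j \<in> K"
    proof (rule ccontr)
      assume "j \<notin> K"
      then have "A $$ (i, j) = 0" if "i < N" for i using supp[of i j] that j IJ(2) by auto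
      then show False using det_submatrix_zero_col[OF A IJ j] det by blast
    qed
  qed
qed

lemma det_skew_odd:
  fixes B :: "'a :: {idom, ring_char_0} mat"
  assumes B: "B \<in> carrier_mat N N" and odd: "odd N"
    and skew: "\<And>i j. i < N \<Longrightarrow> j < N \<Longrightarrow> B $$ (j, i) = - B $$ (i, j)"
  shows "det B = 0"
proof -
  have T: "transpose_mat B = (-1) \<cdot>\<^sub>m B"
  proof (rule eq_matI)
    fix i j assume "i < dim_row ((-1) \<cdot>\<^sub>m B)" "j < dim_col ((-1) \<cdot>\<^sub>m B)"
    then show "transpose_mat B $$ (i, j) = ((-1) \<cdot>\<^sub>m B) $$ (i, j)" using B skew[of i j] by simp
  qed (use B in simp_all)
  have "det B = det (transpose_mat B)" using det_transpose[OF B] by simp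
  also have "\<dots> = (-1) ^ N * det B" using B by (simp add: T)
  also have "\<dots> = - det B" using odd by simp
  finally show ?thesis by simp
qed

lemma det_principal_submatrix_skew_odd:
  fixes A :: "'a :: {idom, ring_char_0} mat"
  assumes A: "A \<in> carrier_mat N N" and I: "I \<subseteq> {..<N}" and odd: "odd (card I)"
    and skew: "\<And>i j. i < N \<Longrightarrow> j < N \<Longrightarrow> A $$ (j, i) = - A $$ (i, j)"
  shows "det (submatrix A I I) = 0"
proof (rule det_skew_odd[OF submatrix_carrier_mat[OF A I I] odd])
  fix p q assume pq: "p < card I" "q < card I"
  then have "pick I p < N" "pick I q < N" using I pick_in_set by blast+
  then show "submatrix A I I $$ (q, p) = - submatrix A I I $$ (p, q)"
    using submatrix_index_subset[OF A I I] pq skew[of "pick I p" "pick I q"] by simp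
qed

lemma det_permutation_support:
  assumes B: "B \<in> carrier_mat N N" and perm: "\<sigma> permutes {0..<N}"
    and supp: "\<And>i j. i < N \<Longrightarrow> j < N \<Longrightarrow> j \<noteq> \<sigma> i \<Longrightarrow> B $$ (i, j) = 0"
  shows "det B = signof \<sigma> * (\<Prod>i = 0..<N. B $$ (i, \<sigma> i))"
proof -
  let ?P = "{p. p permutes {0..<N}}"
  let ?f = "\<lambda>p. signof p * (\<Prod>i = 0..<N. B $$ (i, p i))"
  have vanish: "?f p = 0" if "p \<in> ?P - {\<sigma>}" for p
  proof -
    from that have p: "p permutes {0..<N}" and "p \<noteq> \<sigma>" by auto
    then obtain i where i: "p i \<noteq> \<sigma> i" by (meson ext)
    have "i < N"
    proof (rule ccontr)
      assume "\<not> i < N"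
      then show False using i p perm by (simp add: permutes_not_in)
    qed
    moreover have "p i < N" using \<open>i < N\<close> permutes_in_image[OF p] by simp
    ultimately have "B $$ (i, p i) = 0" using supp i by blast
    then have "(\<Prod>i = 0..<N. B $$ (i, p i)) = 0" using \<open>i < N\<close> by (intro prod_zero) auto
    then show ?thesis by simp
  qed
  have "det B = ?f \<sigma> + (\<Sum>p\<in>?P - {\<sigma>}. ?f p)"
    unfolding det_def'[OF B] by (rule sum.remove) (use finite_permutations perm in auto)
  also have "(\<Sum>p\<in>?P - {\<sigma>}. ?f p) = 0" using vanish by (rule sum.neutral[OF ballI])
  finally show ?thesis by simp
qed

lemma involution_permutes:
  assumes "\<And>x. x \<notin> S \<Longrightarrow> p x = x" "\<And>x. p (p x) = x"
  shows "p permutes S"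
  unfolding permutes_def using assms by metis

definition position_map :: "'b list \<Rightarrow> ('b \<Rightarrow> 'b) \<Rightarrow> nat \<Rightarrow> nat" where
  "position_map xs f p =
     (if p < length xs then inv_into {..<length xs} ((!) xs) (f (xs ! p)) else p)"

lemma nth_position_map:
  assumes xs: "distinct xs" and f_set: "f ` set xs \<subseteq> set xs" and p: "p < length xs"
  shows "position_map xs f p < length xs" "xs ! position_map xs f p = f (xs ! p)"
proof -
  let ?q = "inv_into {..<length xs} ((!) xs) (f (xs ! p))"
  have "(!) xs ` {..<length xs} = set xs"
    using bij_betw_nth[OF xs refl refl] by (simp add: bij_betw_def)
  then have fp: "f (xs ! p) \<in> (!) xs ` {..<length xs}" using f_set p by auto
  have "?q < length xs" using inv_into_into[OF fp] by simp
  moreover have "xs ! ?q = f (xs ! p)" using f_inv_into_f[OF fp] .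
  ultimately show "position_map xs f p < length xs" "xs ! position_map xs f p = f (xs ! p)"
    using p by (simp_all add: position_map_def)
qed

lemma position_map_permutes:
  assumes xs: "distinct xs" and f_set: "f ` set xs \<subseteq> set xs"
    and f_inv: "\<And>x. x \<in> set xs \<Longrightarrow> f (f x) = x"
  shows "position_map xs f permutes {0..<length xs}"
proof (rule involution_permutes)
  fix p
  show "position_map xs f (position_map xs f p) = p"
  proof (cases "p < length xs")
    case True
    note q = nth_position_map[OF xs f_set True]
    note qq = nth_position_map[OF xs f_set q(1)]
    have "xs ! position_map xs f (position_map xs f p) = xs ! p"
      using qq(2) q(2) f_inv True by simp
    then show ?thesis using nth_eq_iff_index_eq[OF xs qq(1) True] by simp
  qed (simp add: position_map_def)
qed (simp add: position_map_def)

section \<open>The basis of g_n\<close>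

definition xy_list :: "nat \<Rightarrow> gbasis list" where
  "xy_list n = [Xm, Xp] @ map (\<lambda>i. Y i True) [1..<n-1] @ map (\<lambda>i. Y i False) [1..<n-1]"

lemma gbasis_list_eq: "gbasis_list n = H # xy_list n @ zlist n"
  by (simp add: gbasis_list_def xy_list_def zlist_def)

lemma length_xy_list: "n \<ge> 2 \<Longrightarrow> length (xy_list n) = 2 * (n - 1)"
  by (simp add: xy_list_def)

lemma set_zlist: "set (zlist n) = {Z i j | i j. 1 \<le> i \<and> i \<le> j \<and> j < n - 1}"
  by (auto simp: zlist_def) (metis atLeastLessThan_iff imageI le_trans linorder_not_le)

lemma distinct_zlist: "distinct (zlist n)"
  unfolding zlist_def
proof (rule distinct_concat)
  show "distinct (map (\<lambda>i. map (Z i) [i..<n - 1]) [1..<n - 1])"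
    by (auto simp: distinct_map inj_on_def dest!: arg_cong[where f = hd] simp: upt_conv_Cons)
qed (auto simp: distinct_map inj_on_def)

lemma length_zlist: "length (zlist n) = T (n - 2)"
proof -
  have "{1..<n-1} = {1..n-2}" by auto
  then have "length (zlist n) = (\<Sum>i\<in>{1..n-2}. n - 1 - i)"
    by (simp add: zlist_def length_concat comp_def sum_set_upt_conv_sum_list_nat[symmetric])
  also have "\<dots> = (\<Sum>i\<in>{1..n-2}. i)"
    by (subst sum.atLeastAtMost_rev) (rule sum.cong, auto)
  also have "\<dots> = T (n - 2)"
    using gauss_sum_from_Suc_0[where 'a = nat, of "n - 2"] by (simp add: T_def)
  finally show ?thesis .
qed

lemma T_add_2: "T (m + 2) = T m + 2 * m + 3"
proof -
  have "(m + 2) * (m + 2 + 1) = m * (m + 1) + (2 * m + 3) * 2" by (simp add: algebra_simps)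
  then show ?thesis unfolding T_def by simp
qed

lemma length_gbasis_list:
  assumes "n \<ge> 2" shows "length (gbasis_list n) = T n"
proof -
  obtain m where n: "n = m + 2" using assms by (metis add.commute le_Suc_ex)
  then show ?thesis using T_add_2[of m] by (simp add: gbasis_list_eq length_xy_list length_zlist)
qed

lemma distinct_gbasis_list: "distinct (gbasis_list n)"
  by (auto simp: gbasis_list_eq xy_list_def distinct_zlist distinct_map inj_on_def set_zlist)

lemma nth_gbasis_list_central:
  assumes "length (H # xy_list n) \<le> i" "i < length (gbasis_list n)"
  shows "gbasis_list n ! i \<in> set (zlist n)"
proof -
  have L: "gbasis_list n = (H # xy_list n) @ zlist n" by (simp add: gbasis_list_eq)
  have "i - length (H # xy_list n) < length (zlist n)" using assms unfolding L by simp
  then show ?thesis unfolding L nth_append using assms(1) by simp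
qed

lemma bracket_antisym: "bracket b a k = - bracket a b k"
  by (simp add: bracket_def)

lemma bracket_Z_left: "bracket (Z i j) b = (\<lambda>_. 0)"
  by (rule ext, cases b) (auto simp: bracket_def)

lemma bracket_H_nonzero_iff: "bracket a b H \<noteq> 0 \<longleftrightarrow> (a = Xp \<and> b = Xm) \<or> (a = Xm \<and> b = Xp)"
proof -
  have "br0 a b H = (if a = Xp \<and> b = Xm then 1 else 0)" for a b
    by (induction a b rule: br0.induct) (auto simp: unitv_def)
  then show ?thesis by (auto simp: bracket_def)
qed

lemma bracket_Z_diag_nonzero_iff:
  "bracket a b (Z i i) \<noteq> 0 \<longleftrightarrow> (a = Y i True \<and> b = Y i False) \<or> (a = Y i False \<and> b = Y i True)"
proof -
  have "br0 a b (Z i i) = (if a = Y i True \<and> b = Y i False then 1 else 0)" for a b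
    by (induction a b rule: br0.induct) (auto simp: unitv_def)
  then show ?thesis by (auto simp: bracket_def)
qed

lemma centre_eq_zlist:
  "{b \<in> set (gbasis_list n). \<forall>c \<in> set (gbasis_list n). bracket b c = (\<lambda>_. 0)} = set (zlist n)"
  (is "?C = _")
proof
  show "set (zlist n) \<subseteq> ?C" by (auto simp: gbasis_list_eq set_zlist bracket_Z_left)
  show "?C \<subseteq> set (zlist n)"
  proof
    fix b assume "b \<in> ?C"
    then have b: "b \<in> set (gbasis_list n)" "\<And>c k. c \<in> set (gbasis_list n) \<Longrightarrow> bracket b c k = 0"
      by auto
    have "H \<in> set (gbasis_list n)" "Xm \<in> set (gbasis_list n)" "Xp \<in> set (gbasis_list n)"
      by (simp_all add: gbasis_list_eq xy_list_def)
    then have vanish: "bracket b Xp Xp = 0" "bracket b H b = 0" "bracket b Xm H = 0"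
      "bracket b Xp H = 0"
      using b(2) by blast+
    show "b \<in> set (zlist n)"
    proof (cases b)
      case (Y i s)
      then show ?thesis using vanish(2) by (cases s) (simp_all add: bracket_def unitv_def)
    next
      case (Z i j)
      then show ?thesis using b(1) by (auto simp: gbasis_list_eq xy_list_def)
    qed (use vanish in \<open>simp_all add: bracket_def unitv_def\<close>)
  qed
qed

lemma Amat_carrier: "Amat n x \<in> carrier_mat (length (gbasis_list n)) (length (gbasis_list n))"
  by (simp add: Amat_def Let_def)

lemma Amat_index:
  assumes "i < length (gbasis_list n)" "j < length (gbasis_list n)"
  shows "Amat n x $$ (i, j) = (\<Sum>k\<in>set (gbasis_list n).
     of_int (bracket (gbasis_list n ! i) (gbasis_list n ! j) k) * x k)"
  using assms by (simp add: Amat_def Let_def sum_list_distinct_conv_sum_set distinct_gbasis_list)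

lemma Amat_skew:
  assumes "i < length (gbasis_list n)" "j < length (gbasis_list n)"
  shows "Amat n x $$ (j, i) = - Amat n x $$ (i, j)"
  using assms
  by (simp add: Amat_index bracket_antisym[of "gbasis_list n ! j" "gbasis_list n ! i"] sum_negf)

lemma Amat_support:
  assumes ij: "i < length (gbasis_list n)" "j < length (gbasis_list n)"
    and nz: "Amat n x $$ (i, j) \<noteq> 0"
  shows "i < length (H # xy_list n) \<and> j < length (H # xy_list n)"
proof -
  have zero: "Amat n x $$ (i, j) = 0" if "i < length (gbasis_list n)" "j < length (gbasis_list n)"
    and "length (H # xy_list n) \<le> i" for i j
    using nth_gbasis_list_central[OF that(3,1)] that(1,2)
    by (auto simp: Amat_index set_zlist bracket_Z_left)
  have "i < length (H # xy_list n)" using zero[OF ij] nz by (meson not_le)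
  moreover have "j < length (H # xy_list n)"
    using zero[OF ij(2,1)] Amat_skew[OF ij] nz by (metis neg_equal_0_iff_equal not_le)
  ultimately show ?thesis ..
qed

section \<open>A point where the rank is attained\<close>

fun partner :: "gbasis \<Rightarrow> gbasis" where
  "partner Xm = Xp"
| "partner Xp = Xm"
| "partner (Y i s) = Y i (\<not> s)"
| "partner a = a"

fun pair_centre :: "gbasis \<Rightarrow> gbasis" where
  "pair_centre (Y i s) = Z i i"
| "pair_centre _ = H"

definition witness_point :: "gbasis \<Rightarrow> 'a::zero_neq_one" where
  "witness_point k = (case k of H \<Rightarrow> 1 | Z i j \<Rightarrow> if i = j then 1 else 0 | _ \<Rightarrow> 0)"

lemma partner_partner: "partner (partner a) = a"
  by (cases a) auto

lemma partner_xy_list: "partner ` set (xy_list n) \<subseteq> set (xy_list n)"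
  by (auto simp: xy_list_def)

lemma bracket_witness_point:
  assumes "witness_point k \<noteq> (0::'a::zero_neq_one)" and "bracket a b k \<noteq> 0"
  shows "b = partner a \<and> k = pair_centre a"
  using assms
  by (cases k)
    (auto simp: witness_point_def bracket_H_nonzero_iff bracket_Z_diag_nonzero_iff split: if_splits)

lemma pair_centre_xy_list:
  assumes "a \<in> set (xy_list n)"
  shows "pair_centre a \<in> set (gbasis_list n)"
    and "(witness_point (pair_centre a) :: 'a::zero_neq_one) = 1"
    and "bracket a b (pair_centre a) = 0 \<longleftrightarrow> b \<noteq> partner a"
proof -
  show "pair_centre a \<in> set (gbasis_list n)" "(witness_point (pair_centre a) :: 'a) = 1"
    using assms by (auto simp: xy_list_def gbasis_list_eq set_zlist witness_point_def)
  then have w: "(witness_point (pair_centre a) :: 'a) \<noteq> 0" by simp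
  have "bracket a (partner a) (pair_centre a) \<noteq> 0"
    using assms by (auto simp: xy_list_def bracket_def unitv_def)
  then show "bracket a b (pair_centre a) = 0 \<longleftrightarrow> b \<noteq> partner a"
    using bracket_witness_point[OF w, of a b] by auto
qed

lemma Amat_witness_point_index:
  assumes ij: "i < length (gbasis_list n)" "j < length (gbasis_list n)"
    and xy: "gbasis_list n ! i \<in> set (xy_list n)"
  defines "a \<equiv> gbasis_list n ! i"
  shows "Amat n (witness_point :: gbasis \<Rightarrow> 'a::comm_ring_1) $$ (i, j)
    = of_int (bracket a (gbasis_list n ! j) (pair_centre a))"
proof -
  let ?g = "\<lambda>k. of_int (bracket a (gbasis_list n ! j) k) * (witness_point k :: 'a)"
  have vanish: "?g k = 0" if "k \<noteq> pair_centre a" for k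
  proof -
    have "bracket a (gbasis_list n ! j) k = 0 \<or> witness_point k = (0::'a)"
      using that bracket_witness_point by blast
    then show ?thesis by auto
  qed
  have "Amat n witness_point $$ (i, j) = (\<Sum>k\<in>set (gbasis_list n). ?g k)"
    unfolding a_def by (rule Amat_index[OF ij])
  also have "\<dots> = (\<Sum>k\<in>{pair_centre a}. ?g k)"
    using pair_centre_xy_list(1)[OF xy] vanish by (intro sum.mono_neutral_right) (auto simp: a_def)
  also have "\<dots> = of_int (bracket a (gbasis_list n ! j) (pair_centre a))"
    by (simp add: a_def pair_centre_xy_list(2)[OF xy])
  finally show ?thesis .
qed

definition xy_indices :: "nat \<Rightarrow> nat set" where
  "xy_indices n = {1..<Suc (length (xy_list n))}"

lemma xy_indices_subset: "xy_indices n \<subseteq> {..<length (gbasis_list n)}"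
  by (auto simp: xy_indices_def gbasis_list_eq)

lemma card_xy_indices: "card (xy_indices n) = length (xy_list n)"
  by (simp add: xy_indices_def)

lemma submatrix_Amat_witness_point_index:
  assumes p: "p < length (xy_list n)" and q: "q < length (xy_list n)"
  defines "a \<equiv> xy_list n ! p"
  shows "submatrix (Amat n witness_point) (xy_indices n) (xy_indices n) $$ (p, q)
    = of_int (bracket a (xy_list n ! q) (pair_centre a))"
proof -
  let ?I = "xy_indices n"
  have pick: "pick ?I r = Suc r" if "r < length (xy_list n)" for r
  proof -
    have "{b \<in> ?I. b < Suc r} = {1..<Suc r}" using that by (auto simp: xy_indices_def)
    then show ?thesis using pick_card_in_set[of "Suc r" ?I] that by (simp add: xy_indices_def)
  qed
  have len: "Suc r < length (gbasis_list n)" if "r < length (xy_list n)" for r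
    using that by (simp add: gbasis_list_eq)
  have nth: "gbasis_list n ! Suc r = xy_list n ! r" if "r < length (xy_list n)" for r
    using that by (simp add: gbasis_list_eq nth_append)
  have "p < card ?I" "q < card ?I" using p q by (simp_all add: card_xy_indices)
  then have "submatrix (Amat n witness_point) ?I ?I $$ (p, q)
      = Amat n witness_point $$ (pick ?I p, pick ?I q)"
    by (rule submatrix_index_subset[OF Amat_carrier xy_indices_subset xy_indices_subset])
  also have "\<dots> = Amat n witness_point $$ (Suc p, Suc q)" using pick p q by simp
  also have "\<dots> = of_int (bracket a (xy_list n ! q) (pair_centre a))"
  proof -
    have xy: "gbasis_list n ! Suc p \<in> set (xy_list n)" using nth[OF p] nth_mem[OF p] by simp
    from Amat_witness_point_index[OF len[OF p] len[OF q] xy]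
    show ?thesis by (simp only: nth[OF p] nth[OF q] a_def)
  qed
  finally show ?thesis .
qed

lemma det_minor_Amat_witness_point_nonzero:
  "det (submatrix (Amat n (witness_point :: gbasis \<Rightarrow> 'a::{idom, ring_char_0}))
     (xy_indices n) (xy_indices n)) \<noteq> 0"
proof -
  let ?xs = "xy_list n"
    and ?S = "submatrix (Amat n (witness_point :: gbasis \<Rightarrow> 'a)) (xy_indices n) (xy_indices n)"
  let ?N = "length ?xs" and ?\<sigma> = "position_map ?xs partner"
  have S: "?S \<in> carrier_mat ?N ?N"
    using submatrix_carrier_mat[OF Amat_carrier xy_indices_subset xy_indices_subset]
    by (simp add: card_xy_indices)
  have xs: "distinct ?xs" using distinct_gbasis_list[of n] by (simp add: gbasis_list_eq)
  note \<sigma> = nth_position_map[OF xs partner_xy_list]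
  have "det ?S = signof ?\<sigma> * (\<Prod>i = 0..<?N. ?S $$ (i, ?\<sigma> i))"
  proof (rule det_permutation_support[OF S
      position_map_permutes[OF xs partner_xy_list partner_partner]])
    fix i j assume ij: "i < ?N" "j < ?N" "j \<noteq> ?\<sigma> i"
    then have "?xs ! j \<noteq> partner (?xs ! i)"
      using \<sigma>[OF ij(1)] nth_eq_iff_index_eq[OF xs ij(2) \<sigma>(1)[OF ij(1)]] by metis
    then show "?S $$ (i, j) = 0"
      using ij pair_centre_xy_list(3)[OF nth_mem[OF ij(1)]]
      by (simp add: submatrix_Amat_witness_point_index)
  qed
  moreover have "?S $$ (i, ?\<sigma> i) \<noteq> 0" if i: "i < ?N" for i
  proof -
    have "bracket (?xs ! i) (?xs ! ?\<sigma> i) (pair_centre (?xs ! i)) \<noteq> 0"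
      using \<sigma>(2)[OF i] pair_centre_xy_list(3)[OF nth_mem[OF i]] by simp
    then show ?thesis by (simp add: submatrix_Amat_witness_point_index[OF i \<sigma>(1)[OF i]])
  qed
  then have "(\<Prod>i = 0..<?N. ?S $$ (i, ?\<sigma> i)) \<noteq> 0" by simp
  moreover have "signof ?\<sigma> \<noteq> (0::'a)" by (simp add: sign_def)
  ultimately show ?thesis by simp
qed

lemma card_le_if_det_minor_Amat_nonzero:
  fixes x :: "gbasis \<Rightarrow> 'a::{idom, ring_char_0}"
  assumes n: "n \<ge> 2"
    and IJ: "I \<subseteq> {..<length (gbasis_list n)}" "J \<subseteq> {..<length (gbasis_list n)}" "card J = card I"
    and det: "det (submatrix (Amat n x) I J) \<noteq> 0"
  shows "card I \<le> 2 * (n - 1)"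
proof (rule ccontr)
  let ?K = "{..<length (H # xy_list n)}"
  assume big: "\<not> card I \<le> 2 * (n - 1)"
  have "i \<in> ?K \<and> j \<in> ?K" if "i < length (gbasis_list n)" "j < length (gbasis_list n)"
    and "Amat n x $$ (i, j) \<noteq> 0" for i j
    using Amat_support[OF that] by simp
  note IK = det_submatrix_nonzero_imp_subset(1)[OF Amat_carrier IJ this det]
    and JK = det_submatrix_nonzero_imp_subset(2)[OF Amat_carrier IJ this det]
  have cK: "card ?K = Suc (2 * (n - 1))" using length_xy_list[OF n] by simp
  have "card I \<le> card ?K" using card_mono[OF finite_lessThan IK] .
  then have cI: "card I = card ?K" using big cK by simp
  have "I = ?K" using card_subset_eq[OF finite_lessThan IK cI] .
  moreover have "J = ?K" using card_subset_eq[OF finite_lessThan JK] cI IJ(3) by simp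
  moreover have "?K \<subseteq> {..<length (gbasis_list n)}" by (auto simp: gbasis_list_eq)
  moreover have "odd (card ?K)" using cK by simp
  ultimately have "det (submatrix (Amat n x) I J) = 0"
    using det_principal_submatrix_skew_odd[OF Amat_carrier _ _ Amat_skew] by blast
  then show False using det by simp
qed

lemma generic_rank_eq:
  assumes n: "n \<ge> 2"
  shows "generic_rank TYPE('a::field_char_0) n = 2 * (n - 1)"
proof -
  let ?d = "length (gbasis_list n)"
  define R where "R = {r. \<exists>I J. I \<subseteq> {..<?d} \<and> J \<subseteq> {..<?d} \<and> card I = r \<and> card J = r \<and>
        (\<exists>x :: gbasis \<Rightarrow> 'a. det (submatrix (Amat n x) I J) \<noteq> 0)}"
  have "card I \<le> ?d" if "I \<subseteq> {..<?d}" for I :: "nat set"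
    using card_mono[OF finite_lessThan that] by simp
  then have "finite R" by (intro finite_subset[of R "{..?d}"]) (auto simp: R_def)
  moreover have "r \<le> 2 * (n - 1)" if "r \<in> R" for r
  proof -
    from that obtain I J and x :: "gbasis \<Rightarrow> 'a" where
      IJ: "I \<subseteq> {..<?d}" "J \<subseteq> {..<?d}" "card I = r" "card J = r"
      and det: "det (submatrix (Amat n x) I J) \<noteq> 0"
      by (auto simp: R_def)
    show ?thesis using card_le_if_det_minor_Amat_nonzero[OF n IJ(1,2) _ det] IJ(3,4) by simp
  qed
  moreover have "2 * (n - 1) \<in> R"
  proof -
    have "card (xy_indices n) = 2 * (n - 1)" using card_xy_indices length_xy_list[OF n] by simp
    then show ?thesis unfolding R_def
      using xy_indices_subset[of n] det_minor_Amat_witness_point_nonzero[of n, where 'a = 'a] by blast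
  qed
  ultimately show ?thesis unfolding generic_rank_def R_def[symmetric] by (rule Max_eqI)
qed

theorem proposition3p4:
  fixes n :: nat
  assumes "n \<ge> 2"
  shows "length (gbasis_list n) = T n
    \<and> generic_rank TYPE(real) n = 2 * (n - 1)
    \<and> generic_rank TYPE(complex) n = 2 * (n - 1)
    \<and> num_casimirs TYPE(real) n = T (n - 2) + 1
    \<and> num_casimirs TYPE(complex) n = T (n - 2) + 1
    \<and> {b \<in> set (gbasis_list n). \<forall>c \<in> set (gbasis_list n). bracket b c = (\<lambda>_. 0)}
        = set (zlist n)
    \<and> length (zlist n) = T (n - 2) \<and> distinct (zlist n)"
proof -
  obtain m where n: "n = m + 2" using assms by (metis add.commute le_Suc_ex)
  have dim: "length (gbasis_list n) = T n" by (rule length_gbasis_list[OF assms])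
  have rank: "generic_rank TYPE(real) n = 2 * (n - 1)" "generic_rank TYPE(complex) n = 2 * (n - 1)"
    by (rule generic_rank_eq[OF assms])+
  have "T n - 2 * (n - 1) = T (n - 2) + 1" using T_add_2[of m] by (simp add: n)
  then have "num_casimirs TYPE(real) n = T (n - 2) + 1" "num_casimirs TYPE(complex) n = T (n - 2) + 1"
    unfolding num_casimirs_def dim rank by simp_all
  then show ?thesis using dim rank centre_eq_zlist length_zlist distinct_zlist by blast
qed

end
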